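(* Let $(X,d,\mu)$ be unbounded with base point $a$, assume $X$ is uniformly perfect at $a$ for radii $\ge1$ with constant $\kappa$, and assume that $\mu$ is doubling on $X$ and that $\hat\mu_q$, for some $q>0$, is doubling on $(\widehat X,\hat d)$. Then there are $0<s<q$ and $C_s>0$ such that $$\frac{\mu(B(a,r))}{\mu(B(a,R))}\ge C_s\Bigl(\frac rR\Bigr)^s\quad\text{whenever }1\le r\le R<\infty.$$
   Context: $\mu$ is a positive complete Borel measure on $(X,d)$ with $0<\mu(B)<\infty$ for every (open) ball $B(x,r)=\{y:d(x,y)<r\}$. A measure $\nu$ on a metric space is doubling if there is $C$ with $0<\nu(B(x,2r))\le C\nu(B(x,r))<\infty$ for all balls. $X$ is uniformly perfect at $a$ for radii $\ge1$ with constant $\kappa>1$ if $B(a,\kappa r)\setminus B(a,r)\ne\emptyset$ for all $r\ge1$. Sphericalization: $|x|=d(x,a)$, $\widehat X=X\cup\{\infty\}$, $d_a(x,y)=\frac{d(x,y)}{(1+|x|)(1+|y|)}$ for $x,y\in X$, $d_a(x,\infty)=d_a(\infty,x)=\frac1{1+|x|}$, $d_a(\infty,\infty)=0$; $\hat d(x,y)=\inf\sum_{j=1}^k d_a(x_{j-1},x_j)$ over finite chains $x=x_0,\dots,x_k=y$ in $\widehat X$. The measure $\hat\mu_q$ on $\widehat X$ is $d\hat\mu_q(x)=\frac{d\mu(x)}{(1+|x|)^q}$ on $X$ with $\hat\mu_q(\{\infty\})=0$. *)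

theory Defs
  imports "HOL-Analysis.Analysis"
begin

text \<open>Points of the sphericalization: Some x for x in X, None for the point at infinity.\<close>

definition sph_da :: "'a::metric_space \<Rightarrow> 'a option \<Rightarrow> 'a option \<Rightarrow> real" where
  "sph_da a p q = (case (p, q) of
      (Some x, Some y) \<Rightarrow> dist x y / ((1 + dist x a) * (1 + dist y a))
    | (Some x, None) \<Rightarrow> 1 / (1 + dist x a)
    | (None, Some y) \<Rightarrow> 1 / (1 + dist y a)
    | (None, None) \<Rightarrow> 0)"

fun chain_len :: "('b \<Rightarrow> 'b \<Rightarrow> real) \<Rightarrow> 'b list \<Rightarrow> real" where
  "chain_len f (x # y # zs) = f x y + chain_len f (y # zs)"
| "chain_len f _ = 0"

definition sph_dhat :: "'a::metric_space \<Rightarrow> 'a option \<Rightarrow> 'a option \<Rightarrow> real" where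
  "sph_dhat a p q = Inf {chain_len (sph_da a) xs | xs. xs \<noteq> [] \<and> hd xs = p \<and> last xs = q}"

text \<open>The measure \<open>\<hat>\<mu>_q\<close> on the sphericalization, as a set function
  (no mass at infinity).\<close>
definition sph_measure :: "'a::metric_space \<Rightarrow> real \<Rightarrow> 'a measure \<Rightarrow> 'a option set \<Rightarrow> ennreal" where
  "sph_measure a q M E = (\<integral>\<^sup>+ x\<in>(Some -` E). ennreal (1 / (1 + dist x a) powr q) \<partial>M)"

definition doubling_wrt :: "('b \<Rightarrow> 'b \<Rightarrow> real) \<Rightarrow> ('b set \<Rightarrow> ennreal) \<Rightarrow> bool" where
  "doubling_wrt \<delta> \<nu> \<longleftrightarrow> (\<exists>C::real. \<forall>x r. r > 0 \<longrightarrow>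
      0 < \<nu> {y. \<delta> x y < 2 * r} \<and>
      \<nu> {y. \<delta> x y < 2 * r} \<le> ennreal C * \<nu> {y. \<delta> x y < r} \<and>
      \<nu> {y. \<delta> x y < r} < \<infinity>)"

end

theory Submission
  imports Defs
begin

(* Let T(t) be the \<hat>\<mu>_q-mass of {y. t < |y|}.  The set {y. |x| \<le> |y|} lies in the
   \<hat>d-ball of radius 2 d_a(x,\<infinity>) = 2/(1+|x|) around x; doubling of \<hat>\<mu>_q shrinks it to radius
   d_a(x,\<infinity>)/4, and that ball lies in B(a, 2(1+|x|)) where the weight is comparable to (1+|x|)^-q.
   With uniform perfectness this gives T(\<kappa> r) \<le> B \<mu>(B(a,r)) r^-q.  Conversely, uniform perfectness
   puts a ball of radius r/2, of \<mu>-measure comparable to \<mu>(B(a,r)), inside the annulus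
   r/2 < |y| \<le> (\<kappa>+1) r, so T(r/2) \<ge> c \<mu>(B(a,r)) r^-q + T((\<kappa>+1) r).  Together these give
   T(2(\<kappa>+1) t) \<le> \<theta> T(t) with \<theta> < 1, so T decays like t^-\<epsilon>, and comparing the two bounds
   yields \<mu>(B(a,R)) \<le> C (R/r)^(q-\<epsilon>) \<mu>(B(a,r)). *)

section \<open>Distances to the point at infinity\<close>

lemma one_add_dist_pos [simp]: "0 < 1 + dist x y"
  and one_add_dist_neq_zero [simp]: "1 + dist x y \<noteq> 0"
  using zero_le_dist[of x y] by linarith+

lemma chain_len_ge_abs_diff:
  fixes h :: "'b \<Rightarrow> real"
  assumes lip: "\<And>x y. \<bar>h x - h y\<bar> \<le> f x y" and "xs \<noteq> []"
  shows "\<bar>h (hd xs) - h (last xs)\<bar> \<le> chain_len f xs"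
  using \<open>xs \<noteq> []\<close>
proof (induction xs rule: induct_list012)
  case (3 x y zs)
  have "\<bar>h x - h (last (y # zs))\<bar> \<le> \<bar>h x - h y\<bar> + \<bar>h y - h (last (y # zs))\<bar>"
    by linarith
  also have "\<dots> \<le> f x y + chain_len f (y # zs)"
    using lip 3(2) by (intro add_mono) auto
  finally show ?case by simp
qed simp_all

lemma sph_da_nonneg: "0 \<le> sph_da a p p'"
  by (auto simp: sph_da_def split: option.splits)

lemma abs_sph_da_infinity_diff_le: "\<bar>sph_da a p None - sph_da a p' None\<bar> \<le> sph_da a p p'"
proof (cases p; cases p')
  fix x y assume [simp]: "p = Some x" "p' = Some y"
  define u v where "u = dist x a" and "v = dist y a"
  have "u \<ge> 0" "v \<ge> 0" by (simp_all add: u_def v_def)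
  have "\<bar>sph_da a p None - sph_da a p' None\<bar> = \<bar>1 / (1 + u) - 1 / (1 + v)\<bar>"
    by (simp add: sph_da_def u_def v_def)
  also have "\<dots> = \<bar>v - u\<bar> / ((1 + u) * (1 + v))"
    using \<open>u \<ge> 0\<close> \<open>v \<ge> 0\<close> by (simp add: field_simps)
  also have "\<dots> \<le> dist x y / ((1 + u) * (1 + v))"
    using abs_dist_diff_le[of y a x] \<open>u \<ge> 0\<close> \<open>v \<ge> 0\<close>
    by (intro divide_right_mono) (simp_all add: u_def v_def dist_commute)
  finally show ?thesis by (simp add: sph_da_def u_def v_def)
qed (simp_all add: sph_da_def)

lemma sph_dhat_le_sph_da: "sph_dhat a p p' \<le> sph_da a p p'"
  unfolding sph_dhat_def
proof (rule cInf_lower)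
  show "sph_da a p p' \<in> {chain_len (sph_da a) xs |xs. xs \<noteq> [] \<and> hd xs = p \<and> last xs = p'}"
    by (intro CollectI exI[of _ "[p, p']"]) simp
  show "bdd_below {chain_len (sph_da a) xs |xs. xs \<noteq> [] \<and> hd xs = p \<and> last xs = p'}"
    using chain_len_ge_abs_diff[of "\<lambda>_. 0 :: real" "sph_da a"] sph_da_nonneg
    by (intro bdd_belowI[of _ 0]) auto
qed

lemma abs_sph_da_infinity_diff_le_sph_dhat:
  "\<bar>sph_da a p None - sph_da a p' None\<bar> \<le> sph_dhat a p p'"
  unfolding sph_dhat_def
proof (rule cInf_greatest)
  show "{chain_len (sph_da a) xs |xs. xs \<noteq> [] \<and> hd xs = p \<and> last xs = p'} \<noteq> {}"
    by (intro ex_in_conv[THEN iffD1] exI CollectI exI[of _ "[p, p']"]) simp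
next
  fix d assume "d \<in> {chain_len (sph_da a) xs |xs. xs \<noteq> [] \<and> hd xs = p \<and> last xs = p'}"
  then obtain xs where "xs \<noteq> []" "hd xs = p" "last xs = p'" "d = chain_len (sph_da a) xs"
    by blast
  then show "\<bar>sph_da a p None - sph_da a p' None\<bar> \<le> d"
    using chain_len_ge_abs_diff[OF abs_sph_da_infinity_diff_le, of xs] by simp
qed

lemma sph_dhat_lt_of_dist_le:
  assumes "dist x a \<le> dist y a"
  shows "sph_dhat a (Some x) (Some y) < 2 * sph_da a (Some x) None"
proof -
  define u v where "u = dist x a" and "v = dist y a"
  have "u \<ge> 0" "u \<le> v" "1 + u > 0" "1 + v > 0"
    using assms by (simp_all add: u_def v_def)
  have "dist x y \<le> u + v"
    using dist_triangle[of x y a] by (simp add: u_def v_def dist_commute)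
  have "sph_dhat a (Some x) (Some y) \<le> dist x y / ((1 + u) * (1 + v))"
    using sph_dhat_le_sph_da[of a "Some x" "Some y"] by (simp add: sph_da_def u_def v_def)
  also have "\<dots> \<le> (u + v) / ((1 + u) * (1 + v))"
    using \<open>dist x y \<le> u + v\<close> \<open>u \<ge> 0\<close> \<open>u \<le> v\<close> by (intro divide_right_mono) simp_all
  also have "\<dots> < 2 * (1 + v) / ((1 + u) * (1 + v))"
    using \<open>u \<ge> 0\<close> \<open>u \<le> v\<close> by (intro divide_strict_right_mono) simp_all
  also have "\<dots> = 2 / (1 + u)"
    using \<open>1 + u > 0\<close> \<open>1 + v > 0\<close> by (simp add: divide_simps)
  finally show ?thesis
    by (simp add: sph_da_def u_def)
qed

lemma sph_dhat_lt_quarter_bounds: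
  assumes "sph_dhat a (Some x) (Some y) < sph_da a (Some x) None / 4"
  shows "dist y a < 2 * (1 + dist x a)" and "1 / (1 + dist y a) < 5 / 4 * (1 / (1 + dist x a))"
proof -
  define A B where "A = 1 / (1 + dist x a)" and "B = 1 / (1 + dist y a)"
  have close: "\<bar>A - B\<bar> < A / 4"
    using abs_sph_da_infinity_diff_le_sph_dhat[of a "Some x" "Some y"] assms
    by (simp add: sph_da_def A_def B_def)
  then have "3 / 4 * A < B"
    by linarith
  then have "1 + dist y a < 4 / 3 * (1 + dist x a)"
    by (simp add: A_def B_def field_simps add_pos_nonneg)
  then have "3 * dist y a < 1 + 4 * dist x a"
    by (simp add: algebra_simps)
  then show "dist y a < 2 * (1 + dist x a)"
    using zero_le_dist[of x a] unfolding distrib_left by linarith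
  show "B < 5 / 4 * A"
    using close by linarith
qed

section \<open>Doubling measures\<close>

lemma doubling_wrt_ball_pos_finite:
  assumes "doubling_wrt \<delta> \<nu>" "r > 0"
  shows "0 < \<nu> {y. \<delta> x y < r}" "\<nu> {y. \<delta> x y < r} < \<infinity>"
proof -
  obtain C where C: "\<And>x r. r > 0 \<Longrightarrow> 0 < \<nu> {y. \<delta> x y < 2 * r} \<and> \<nu> {y. \<delta> x y < r} < \<infinity>"
    using assms(1) unfolding doubling_wrt_def by blast
  show "0 < \<nu> {y. \<delta> x y < r}" using C[of "r / 2" x] assms(2) by simp
  show "\<nu> {y. \<delta> x y < r} < \<infinity>" using C[of r x] assms(2) by simp
qed

lemma doubling_wrt_iterate:
  assumes "doubling_wrt \<delta> \<nu>"
  obtains C :: real where "C \<ge> 1"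
    "\<And>x r n. r > 0 \<Longrightarrow> \<nu> {y. \<delta> x y < 2 ^ n * r} \<le> ennreal C ^ n * \<nu> {y. \<delta> x y < r}"
proof -
  obtain C where C: "\<And>x r. r > 0 \<Longrightarrow> \<nu> {y. \<delta> x y < 2 * r} \<le> ennreal C * \<nu> {y. \<delta> x y < r}"
    using assms unfolding doubling_wrt_def by blast
  have "\<nu> {y. \<delta> x y < 2 ^ n * r} \<le> ennreal (max 1 C) ^ n * \<nu> {y. \<delta> x y < r}"
    if "r > 0" for x r n
  proof (induction n)
    case (Suc n)
    have "\<nu> {y. \<delta> x y < 2 ^ Suc n * r} \<le> ennreal C * \<nu> {y. \<delta> x y < 2 ^ n * r}"
      using C[of "2 ^ n * r" x] \<open>r > 0\<close> by (simp add: mult.assoc)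
    also have "\<dots> \<le> ennreal (max 1 C) * (ennreal (max 1 C) ^ n * \<nu> {y. \<delta> x y < r})"
      using Suc.IH by (intro mult_mono ennreal_leI) simp_all
    finally show ?case
      by (simp add: mult.assoc)
  qed simp
  then show thesis
    by (intro that[of "max 1 C"]) auto
qed

locale doubling_metric_measure =
  fixes \<mu> :: "'a::metric_space measure"
  assumes sets_borel: "sets borel \<subseteq> sets \<mu>"
    and doubling: "doubling_wrt dist (emeasure \<mu>)"
begin

lemma space_eq: "space \<mu> = UNIV"
proof -
  have "UNIV \<in> sets \<mu>"
    using sets_borel by auto
  then show ?thesis
    using sets.sets_into_space by blast
qed

lemma measurable_from_borel: "f \<in> borel_measurable borel \<Longrightarrow> f \<in> borel_measurable \<mu>"
  using borel_measurable_subalgebra[OF sets_borel] by (simp add: space_eq)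

lemma sets_ball [measurable]: "ball x r \<in> sets \<mu>"
  using sets_borel by auto

lemma emeasure_ball_finite: "emeasure \<mu> (ball x r) < \<infinity>"
proof (cases "r > 0")
  case True
  then show ?thesis
    using doubling_wrt_ball_pos_finite(2)[OF doubling] by (simp add: ball_def)
qed (simp add: ball_empty)

lemma emeasure_ball: "emeasure \<mu> (ball x r) = ennreal (measure \<mu> (ball x r))"
  using emeasure_ball_finite by (intro emeasure_eq_ennreal_measure) (simp add: less_top)

lemma measure_ball_pos: "r > 0 \<Longrightarrow> 0 < measure \<mu> (ball x r)"
  using doubling_wrt_ball_pos_finite(1)[OF doubling, of r x] emeasure_ball[of x r]
  by (simp add: ball_def)

lemma measure_ball_mono: "r \<le> r' \<Longrightarrow> measure \<mu> (ball x r) \<le> measure \<mu> (ball x r')"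
  using emeasure_ball_finite[of x r']
  by (intro measure_mono_fmeasurable) (auto simp: fmeasurable_def)

lemma measure_ball_scale:
  assumes "k \<ge> 1"
  obtains E where "E > 0" "\<And>x r. measure \<mu> (ball x (k * r)) \<le> E * measure \<mu> (ball x r)"
proof -
  obtain C where "C \<ge> 1" and C:
    "\<And>x r n. r > 0 \<Longrightarrow> emeasure \<mu> (ball x (2 ^ n * r)) \<le> ennreal C ^ n * emeasure \<mu> (ball x r)"
    using doubling_wrt_iterate[OF doubling] unfolding ball_def by blast
  obtain n where "k < 2 ^ n"
    using real_arch_pow[of 2 k] by auto
  have bound: "measure \<mu> (ball x (k * r)) \<le> C ^ n * measure \<mu> (ball x r)" for x r
  proof (cases "r > 0")
    case True
    have "measure \<mu> (ball x (k * r)) \<le> measure \<mu> (ball x (2 ^ n * r))"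
      using \<open>k < 2 ^ n\<close> True by (intro measure_ball_mono) simp
    also have "\<dots> \<le> C ^ n * measure \<mu> (ball x r)"
    proof -
      have "ennreal (measure \<mu> (ball x (2 ^ n * r))) \<le> ennreal (C ^ n * measure \<mu> (ball x r))"
        using C[OF True, of x n] \<open>C \<ge> 1\<close> by (simp add: emeasure_ball ennreal_power ennreal_mult)
      then show ?thesis
        using \<open>C \<ge> 1\<close> by (simp add: ennreal_le_iff)
    qed
    finally show ?thesis .
  next
    case False
    then show ?thesis
      using \<open>k \<ge> 1\<close> by (simp add: ball_empty mult_nonneg_nonpos)
  qed
  then show thesis
    using \<open>C \<ge> 1\<close> by (intro that[of "C ^ n"]) simp_all
qed

end

section \<open>The tail of the sphericalized measure\<close>

locale sphericalized_doubling = doubling_metric_measure \<mu> for \<mu> :: "'a::metric_space measure" +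
  fixes a :: 'a and q :: real
  assumes q_pos: "q > 0"
    and sph_doubling: "doubling_wrt (sph_dhat a) (sph_measure a q \<mu>)"
begin

definition weight :: "'a \<Rightarrow> real" where
  "weight y = 1 / (1 + dist y a) powr q"

definition tail :: "real \<Rightarrow> real" where
  "tail t = enn2real (\<integral>\<^sup>+ y \<in> {y. t < dist y a}. ennreal (weight y) \<partial>\<mu>)"

lemma weight_pos: "0 < weight y"
  by (simp add: weight_def)

lemma borel_measurable_dist_base [measurable]: "(\<lambda>y. dist y a) \<in> borel_measurable borel"
  by (intro borel_measurable_continuous_onI continuous_intros)

lemma weight_measurable [measurable]: "(\<lambda>y. ennreal (weight y)) \<in> borel_measurable \<mu>"
  by (rule measurable_from_borel) (unfold weight_def, measurable)

lemma sets_dist_less [measurable]: "{y. t < dist y a} \<in> sets \<mu>"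
  by (rule subsetD[OF sets_borel]) measurable

lemma sets_dist_between [measurable]: "{y. t < dist y a \<and> dist y a \<le> t'} \<in> sets \<mu>"
  by (rule subsetD[OF sets_borel]) measurable

lemma sph_measure_eq: "sph_measure a q \<mu> P = (\<integral>\<^sup>+ y \<in> Some -` P. ennreal (weight y) \<partial>\<mu>)"
  by (simp add: sph_measure_def weight_def)

lemma tail_integral_le_sph_measure:
  "(\<integral>\<^sup>+ y \<in> {y. dist x a \<le> dist y a}. ennreal (weight y) \<partial>\<mu>)
     \<le> sph_measure a q \<mu> {p. sph_dhat a (Some x) p < 2 * sph_da a (Some x) None}"
  unfolding sph_measure_eq using sph_dhat_lt_of_dist_le[of x a]
  by (intro nn_set_integral_set_mono) auto

lemma tail_integral_finite: "(\<integral>\<^sup>+ y \<in> {y. t < dist y a}. ennreal (weight y) \<partial>\<mu>) < \<infinity>"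
proof -
  have "(\<integral>\<^sup>+ y \<in> {y. t < dist y a}. ennreal (weight y) \<partial>\<mu>)
      \<le> (\<integral>\<^sup>+ y \<in> {y. dist a a \<le> dist y a}. ennreal (weight y) \<partial>\<mu>)"
    by (intro nn_set_integral_set_mono) auto
  also have "\<dots> \<le> sph_measure a q \<mu> {p. sph_dhat a (Some a) p < 2 * sph_da a (Some a) None}"
    by (rule tail_integral_le_sph_measure)
  also have "\<dots> < \<infinity>"
    by (intro doubling_wrt_ball_pos_finite(2)[OF sph_doubling]) (simp add: sph_da_def)
  finally show ?thesis .
qed

lemma ennreal_tail: "ennreal (tail t) = (\<integral>\<^sup>+ y \<in> {y. t < dist y a}. ennreal (weight y) \<partial>\<mu>)"
  using tail_integral_finite by (simp add: tail_def less_top[symmetric])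

lemma tail_nonneg: "0 \<le> tail t"
  by (simp add: tail_def)

lemma tail_antimono: "t \<le> t' \<Longrightarrow> tail t' \<le> tail t"
  unfolding tail_def using tail_integral_finite
  by (intro enn2real_mono nn_set_integral_set_mono) auto

lemma tail_split:
  assumes "t \<le> t'"
  shows "ennreal (tail t)
    = (\<integral>\<^sup>+ y \<in> {y. t < dist y a \<and> dist y a \<le> t'}. ennreal (weight y) \<partial>\<mu>) + ennreal (tail t')"
proof -
  have "indicator {y. t < dist y a} y
      = indicator {y. t < dist y a \<and> dist y a \<le> t'} y + (indicator {y. t' < dist y a} y :: ennreal)"
    for y
    using assms by (auto split: split_indicator)
  then show ?thesis
    unfolding ennreal_tail by (simp add: distrib_left nn_integral_add)
qed

lemma sph_measure_quarter_ball_le: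
  "sph_measure a q \<mu> {p. sph_dhat a (Some x) p < sph_da a (Some x) None / 4}
     \<le> ennreal ((5 / 4) powr q * weight x) * emeasure \<mu> (ball a (2 * (1 + dist x a)))"
proof -
  let ?S = "Some -` {p. sph_dhat a (Some x) p < sph_da a (Some x) None / 4}"
  have "ennreal (weight y) * indicator ?S y
      \<le> ennreal ((5 / 4) powr q * weight x) * indicator (ball a (2 * (1 + dist x a))) y" for y
  proof (cases "y \<in> ?S")
    case True
    then have near: "1 / (1 + dist y a) < 5 / 4 * (1 / (1 + dist x a))"
      and inball: "y \<in> ball a (2 * (1 + dist x a))"
      using sph_dhat_lt_quarter_bounds by (auto simp: dist_commute)
    have "weight y = (1 / (1 + dist y a)) powr q"
      by (simp add: weight_def powr_divide)
    also have "\<dots> \<le> (5 / 4 * (1 / (1 + dist x a))) powr q"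
      using q_pos near by (intro powr_mono2) simp_all
    also have "\<dots> = (5 / 4) powr q * weight x"
      by (subst powr_mult) (simp_all add: weight_def powr_divide)
    finally have "weight y \<le> (5 / 4) powr q * weight x" .
    then show ?thesis
      using True inball by (simp add: ennreal_leI)
  qed simp
  then have "sph_measure a q \<mu> {p. sph_dhat a (Some x) p < sph_da a (Some x) None / 4}
      \<le> (\<integral>\<^sup>+ y. ennreal ((5 / 4) powr q * weight x) * indicator (ball a (2 * (1 + dist x a))) y \<partial>\<mu>)"
    unfolding sph_measure_eq by (intro nn_integral_mono) auto
  then show ?thesis
    by (simp add: nn_integral_cmult_indicator)
qed

lemma tail_le_weight_measure_ball:
  obtains C where "C > 0"
    "\<And>x. tail (dist x a) \<le> C * weight x * measure \<mu> (ball a (2 * (1 + dist x a)))"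
proof -
  obtain D where "D \<ge> 1" and D: "\<And>p r n. r > 0 \<Longrightarrow>
      sph_measure a q \<mu> {p'. sph_dhat a p p' < 2 ^ n * r}
        \<le> ennreal D ^ n * sph_measure a q \<mu> {p'. sph_dhat a p p' < r}"
    using doubling_wrt_iterate[OF sph_doubling] by blast
  define C where "C = D ^ 3 * (5 / 4) powr q"
  have "tail (dist x a) \<le> C * weight x * measure \<mu> (ball a (2 * (1 + dist x a)))" for x
  proof -
    let ?\<rho> = "sph_da a (Some x) None"
    have "?\<rho> > 0"
      by (simp add: sph_da_def)
    have "ennreal (tail (dist x a)) \<le> (\<integral>\<^sup>+ y \<in> {y. dist x a \<le> dist y a}. ennreal (weight y) \<partial>\<mu>)"
      unfolding ennreal_tail by (intro nn_set_integral_set_mono) auto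
    also have "\<dots> \<le> sph_measure a q \<mu> {p. sph_dhat a (Some x) p < 2 ^ 3 * (?\<rho> / 4)}"
      using tail_integral_le_sph_measure[of x] by simp
    also have "\<dots> \<le> ennreal D ^ 3 * sph_measure a q \<mu> {p. sph_dhat a (Some x) p < ?\<rho> / 4}"
      using \<open>?\<rho> > 0\<close> by (intro D) simp
    also have "\<dots> \<le> ennreal D ^ 3 * (ennreal ((5 / 4) powr q * weight x) * emeasure \<mu> (ball a (2 * (1 + dist x a))))"
      by (intro mult_left_mono sph_measure_quarter_ball_le) simp
    also have "\<dots> = ennreal (C * weight x * measure \<mu> (ball a (2 * (1 + dist x a))))"
      using \<open>D \<ge> 1\<close> weight_pos[of x]
      by (simp add: C_def emeasure_ball ennreal_power ennreal_mult' mult_ac)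
    finally show ?thesis
      using \<open>D \<ge> 1\<close> weight_pos[of x] by (simp add: C_def ennreal_le_iff)
  qed
  then show thesis
    using \<open>D \<ge> 1\<close> by (intro that[of C]) (simp_all add: C_def)
qed

lemma annulus_integral_ge:
  assumes "r \<le> dist z a" "dist z a < k * r" "1 \<le> r"
  shows "ennreal (measure \<mu> (ball z (r / 2)) / ((k + 2) * r) powr q)
    \<le> (\<integral>\<^sup>+ y \<in> {y. r / 2 < dist y a \<and> dist y a \<le> (k + 1) * r}. ennreal (weight y) \<partial>\<mu>)"
proof -
  define w\<^sub>0 where "w\<^sub>0 = 1 / ((k + 2) * r) powr q"
  have pointwise: "ennreal w\<^sub>0 * indicator (ball z (r / 2)) y
      \<le> ennreal (weight y) * indicator {y. r / 2 < dist y a \<and> dist y a \<le> (k + 1) * r} y" for y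
  proof (cases "y \<in> ball z (r / 2)")
    case True
    then have "dist z y < r / 2"
      by simp
    then have "r / 2 < dist y a" "dist y a \<le> (k + 1) * r"
      using assms dist_triangle[of z a y] dist_triangle[of y a z]
      by (simp_all add: dist_commute algebra_simps)
    moreover have "w\<^sub>0 \<le> weight y"
    proof -
      have "1 + dist y a \<le> (k + 2) * r"
        using \<open>dist y a \<le> (k + 1) * r\<close> \<open>1 \<le> r\<close> by (simp add: algebra_simps)
      moreover have "0 < (k + 2) * r"
        using calculation one_add_dist_pos[of y a] by linarith
      then have "0 < k + 2"
        using \<open>1 \<le> r\<close> by (simp add: zero_less_mult_iff)
      ultimately show ?thesis
        unfolding w\<^sub>0_def weight_def using q_pos \<open>1 \<le> r\<close>
        by (intro divide_left_mono powr_mono2 mult_pos_pos) simp_all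
    qed
    ultimately show ?thesis
      using True by (simp add: ennreal_leI)
  qed simp
  have "ennreal (measure \<mu> (ball z (r / 2)) / ((k + 2) * r) powr q)
      = ennreal w\<^sub>0 * emeasure \<mu> (ball z (r / 2))"
    by (simp add: w\<^sub>0_def emeasure_ball ennreal_mult'[symmetric])
  also have "\<dots> = (\<integral>\<^sup>+ y. ennreal w\<^sub>0 * indicator (ball z (r / 2)) y \<partial>\<mu>)"
    by (simp add: nn_integral_cmult_indicator)
  also have "\<dots> \<le> (\<integral>\<^sup>+ y \<in> {y. r / 2 < dist y a \<and> dist y a \<le> (k + 1) * r}. ennreal (weight y) \<partial>\<mu>)"
    using pointwise by (intro nn_integral_mono) (simp add: mult.commute)
  finally show ?thesis .
qed

end

section \<open>Power decay of the tail\<close>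

lemma antimono_powr_decay_of_contraction:
  fixes f :: "real \<Rightarrow> real"
  assumes "L > 1" "\<epsilon> \<ge> 0" "t\<^sub>0 > 0"
    and antimono: "\<And>t u. t\<^sub>0 \<le> t \<Longrightarrow> t \<le> u \<Longrightarrow> f u \<le> f t"
    and contraction: "\<And>t. t\<^sub>0 \<le> t \<Longrightarrow> f (L * t) \<le> L powr (- \<epsilon>) * f t"
    and "t\<^sub>0 \<le> t" "t \<le> u" "0 \<le> f t"
  shows "f u \<le> L powr \<epsilon> * (u / t) powr (- \<epsilon>) * f t"
proof -
  have "t > 0"
    using assms by linarith
  have grow: "t\<^sub>0 \<le> L ^ n * t" for n
  proof -
    have "t \<le> L ^ n * t"
      using \<open>t > 0\<close> \<open>L > 1\<close> by (simp add: mult_le_cancel_right1)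
    then show ?thesis
      using \<open>t\<^sub>0 \<le> t\<close> by linarith
  qed
  have iterate: "f (L ^ n * t) \<le> (L ^ n) powr (- \<epsilon>) * f t" for n
  proof (induction n)
    case (Suc n)
    have "f (L ^ Suc n * t) \<le> L powr (- \<epsilon>) * f (L ^ n * t)"
      using contraction[OF grow[of n]] by (simp add: mult.assoc)
    also have "\<dots> \<le> L powr (- \<epsilon>) * ((L ^ n) powr (- \<epsilon>) * f t)"
      using Suc.IH by (rule mult_left_mono) simp
    also have "\<dots> = (L ^ Suc n) powr (- \<epsilon>) * f t"
      using \<open>L > 1\<close> by (simp add: powr_mult)
    finally show ?case .
  qed simp
  define \<rho> where "\<rho> = u / t"
  have "\<rho> \<ge> 1"
    using \<open>t \<le> u\<close> \<open>t > 0\<close> by (simp add: \<rho>_def)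
  define k where "k = nat \<lfloor>log L \<rho>\<rfloor>"
  have "real k = \<lfloor>log L \<rho>\<rfloor>"
    using \<open>\<rho> \<ge> 1\<close> \<open>L > 1\<close> by (simp add: k_def)
  then have "L powr real k \<le> \<rho>" "\<rho> < L powr (real k + 1)"
    using floor_log_eq_powr_iff[of \<rho> L "\<lfloor>log L \<rho>\<rfloor>"] \<open>\<rho> \<ge> 1\<close> \<open>L > 1\<close> by simp_all
  then have "L ^ k \<le> \<rho>" "\<rho> / L < L ^ k"
    using \<open>L > 1\<close> by (simp_all add: powr_realpow powr_add divide_less_eq mult.commute)
  have "f u \<le> f (L ^ k * t)"
    using \<open>L ^ k \<le> \<rho>\<close> \<open>t > 0\<close> by (intro antimono grow) (simp add: \<rho>_def field_simps)
  also have "\<dots> \<le> (L ^ k) powr (- \<epsilon>) * f t"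
    by (rule iterate)
  also have "\<dots> \<le> (\<rho> / L) powr (- \<epsilon>) * f t"
    using \<open>\<rho> / L < L ^ k\<close> \<open>\<rho> \<ge> 1\<close> \<open>L > 1\<close> \<open>\<epsilon> \<ge> 0\<close> \<open>0 \<le> f t\<close>
    by (intro mult_right_mono powr_mono2') simp_all
  also have "(\<rho> / L) powr (- \<epsilon>) = L powr \<epsilon> * \<rho> powr (- \<epsilon>)"
    using \<open>\<rho> \<ge> 1\<close> \<open>L > 1\<close> by (simp add: powr_divide powr_minus field_simps)
  finally show ?thesis
    by (simp add: \<rho>_def mult.assoc)
qed

locale uniformly_perfect_sphericalized_doubling = sphericalized_doubling \<mu> a q
  for \<mu> :: "'a::metric_space measure" and a q +
  fixes \<kappa> :: real
  assumes kappa_gt_1: "\<kappa> > 1"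
    and uniformly_perfect: "\<And>r. r \<ge> 1 \<Longrightarrow> ball a (\<kappa> * r) - ball a r \<noteq> {}"
begin

lemma tail_le_measure_ball:
  obtains B where "B > 0" "\<And>r. 1 \<le> r \<Longrightarrow> tail (\<kappa> * r) \<le> B * measure \<mu> (ball a r) / r powr q"
proof -
  obtain C where "C > 0"
    and C: "\<And>x. tail (dist x a) \<le> C * weight x * measure \<mu> (ball a (2 * (1 + dist x a)))"
    using tail_le_weight_measure_ball by blast
  obtain E where "E > 0" and E: "\<And>x r. measure \<mu> (ball x (4 * \<kappa> * r)) \<le> E * measure \<mu> (ball x r)"
    using measure_ball_scale[of "4 * \<kappa>"] kappa_gt_1 by auto
  have "tail (\<kappa> * r) \<le> C * E * measure \<mu> (ball a r) / r powr q" if "1 \<le> r" for r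
  proof -
    obtain x where "x \<in> ball a (\<kappa> * r) - ball a r"
      using uniformly_perfect \<open>1 \<le> r\<close> by blast
    then have far: "r \<le> dist x a" and near: "dist x a < \<kappa> * r"
      by (auto simp: dist_commute)
    have "weight x \<le> 1 / r powr q"
      unfolding weight_def using far \<open>1 \<le> r\<close> q_pos
      by (intro divide_left_mono powr_mono2 mult_pos_pos) simp_all
    have "1 \<le> \<kappa> * r"
      using mult_mono[of 1 \<kappa> 1 r] \<open>1 \<le> r\<close> kappa_gt_1 by simp
    then have "measure \<mu> (ball a (2 * (1 + dist x a))) \<le> measure \<mu> (ball a (4 * \<kappa> * r))"
      using near by (intro measure_ball_mono) simp
    also have "\<dots> \<le> E * measure \<mu> (ball a r)"
      by (rule E)
    finally have ball_le: "measure \<mu> (ball a (2 * (1 + dist x a))) \<le> E * measure \<mu> (ball a r)" .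
    have "tail (\<kappa> * r) \<le> tail (dist x a)"
      using near by (intro tail_antimono) simp
    also have "\<dots> \<le> C * weight x * measure \<mu> (ball a (2 * (1 + dist x a)))"
      by (rule C)
    also have "\<dots> \<le> C * (1 / r powr q) * (E * measure \<mu> (ball a r))"
      using \<open>C > 0\<close> \<open>weight x \<le> 1 / r powr q\<close> ball_le weight_pos[of x]
      by (intro mult_mono mult_left_mono) simp_all
    finally show ?thesis
      by (simp add: mult_ac)
  qed
  then show thesis
    using \<open>C > 0\<close> \<open>E > 0\<close> by (intro that[of "C * E"]) simp_all
qed

lemma tail_annulus_ge:
  obtains c where "c > 0"
    "\<And>r. 1 \<le> r \<Longrightarrow> c * measure \<mu> (ball a r) / r powr q + tail ((\<kappa> + 1) * r) \<le> tail (r / 2)"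
proof -
  obtain E where "E > 0"
    and E: "\<And>x r. measure \<mu> (ball x (2 * (\<kappa> + 1) * r)) \<le> E * measure \<mu> (ball x r)"
    using measure_ball_scale[of "2 * (\<kappa> + 1)"] kappa_gt_1 by auto
  define c where "c = 1 / ((\<kappa> + 2) powr q * E)"
  have "c * measure \<mu> (ball a r) / r powr q + tail ((\<kappa> + 1) * r) \<le> tail (r / 2)" if "1 \<le> r" for r
  proof -
    obtain z where "z \<in> ball a (\<kappa> * r) - ball a r"
      using uniformly_perfect \<open>1 \<le> r\<close> by blast
    then have z: "r \<le> dist z a" "dist z a < \<kappa> * r"
      by (auto simp: dist_commute)
    have "ball a r \<subseteq> ball z (2 * (\<kappa> + 1) * (r / 2))"
    proof
      fix y assume "y \<in> ball a r"
      then show "y \<in> ball z (2 * (\<kappa> + 1) * (r / 2))"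
        using z dist_triangle[of z y a] by (simp add: algebra_simps)
    qed
    then have "measure \<mu> (ball a r) \<le> measure \<mu> (ball z (2 * (\<kappa> + 1) * (r / 2)))"
      using emeasure_ball_finite[of z] by (intro measure_mono_fmeasurable) (auto simp: fmeasurable_def)
    also have "\<dots> \<le> E * measure \<mu> (ball z (r / 2))"
      by (rule E)
    finally have "c * measure \<mu> (ball a r) / r powr q \<le> measure \<mu> (ball z (r / 2)) / ((\<kappa> + 2) * r) powr q"
      using \<open>E > 0\<close> \<open>1 \<le> r\<close> kappa_gt_1
      by (simp add: c_def powr_mult divide_le_eq mult.commute mult.left_commute)
    then have "ennreal (c * measure \<mu> (ball a r) / r powr q)
        \<le> (\<integral>\<^sup>+ y \<in> {y. r / 2 < dist y a \<and> dist y a \<le> (\<kappa> + 1) * r}. ennreal (weight y) \<partial>\<mu>)"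
      using annulus_integral_ge[OF z \<open>1 \<le> r\<close>] by (auto intro: order_trans ennreal_leI)
    then have "ennreal (c * measure \<mu> (ball a r) / r powr q) + ennreal (tail ((\<kappa> + 1) * r))
        \<le> ennreal (tail (r / 2))"
      using tail_split[of "r / 2" "(\<kappa> + 1) * r"] \<open>1 \<le> r\<close> kappa_gt_1 by (simp add: add_right_mono)
    then show ?thesis
      using \<open>E > 0\<close> \<open>1 \<le> r\<close> tail_nonneg
      by (simp add: c_def ennreal_plus[symmetric] ennreal_le_iff del: ennreal_plus)
  qed
  then show thesis
    using \<open>E > 0\<close> kappa_gt_1 by (intro that[of c]) (simp_all add: c_def)
qed

lemma tail_contraction:
  obtains \<theta> where "0 < \<theta>" "\<theta> < 1" "\<And>t. 1 / 2 \<le> t \<Longrightarrow> tail (2 * (\<kappa> + 1) * t) \<le> \<theta> * tail t"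
proof -
  obtain B where "B > 0" and B: "\<And>r. 1 \<le> r \<Longrightarrow> tail (\<kappa> * r) \<le> B * measure \<mu> (ball a r) / r powr q"
    using tail_le_measure_ball by blast
  obtain c where "c > 0" and c:
    "\<And>r. 1 \<le> r \<Longrightarrow> c * measure \<mu> (ball a r) / r powr q + tail ((\<kappa> + 1) * r) \<le> tail (r / 2)"
    using tail_annulus_ge by blast
  have "tail (2 * (\<kappa> + 1) * t) \<le> B / (B + c) * tail t" if "1 / 2 \<le> t" for t
  proof -
    define r where "r = 2 * t"
    define P where "P = measure \<mu> (ball a r) / r powr q"
    have "1 \<le> r"
      using that by (simp add: r_def)
    have "tail ((\<kappa> + 1) * r) \<le> tail (\<kappa> * r)"
      using \<open>1 \<le> r\<close> by (intro tail_antimono) (simp add: distrib_right)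
    also have "\<dots> \<le> B * P"
      using B[OF \<open>1 \<le> r\<close>] by (simp add: P_def)
    finally have upper: "tail ((\<kappa> + 1) * r) \<le> B * P" .
    have lower: "c * P + tail ((\<kappa> + 1) * r) \<le> tail t"
      using c[OF \<open>1 \<le> r\<close>] by (simp add: P_def r_def)
    have "c * tail ((\<kappa> + 1) * r) \<le> B * (c * P)"
      using upper \<open>c > 0\<close> by (simp add: mult_left_mono mult.left_commute)
    also have "\<dots> \<le> B * (tail t - tail ((\<kappa> + 1) * r))"
      using lower \<open>B > 0\<close> by (intro mult_left_mono) simp_all
    finally have "(B + c) * tail ((\<kappa> + 1) * r) \<le> B * tail t"
      by (simp add: algebra_simps)
    then show ?thesis
      using \<open>B > 0\<close> \<open>c > 0\<close> by (simp add: r_def field_simps mult.assoc)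
  qed
  then show thesis
    using \<open>B > 0\<close> \<open>c > 0\<close> by (intro that[of "B / (B + c)"]) simp_all
qed

lemma tail_power_decay:
  obtains \<epsilon> K where "0 < \<epsilon>" "\<epsilon> < q" "K > 0"
    "\<And>t u. 1 / 2 \<le> t \<Longrightarrow> t \<le> u \<Longrightarrow> tail u \<le> K * (u / t) powr (- \<epsilon>) * tail t"
proof -
  define L where "L = 2 * (\<kappa> + 1)"
  obtain \<theta> where "0 < \<theta>" "\<theta> < 1" and contraction: "\<And>t. 1 / 2 \<le> t \<Longrightarrow> tail (L * t) \<le> \<theta> * tail t"
    unfolding L_def using tail_contraction by blast
  define \<epsilon> where "\<epsilon> = min (q / 2) (- log L \<theta>)"
  have "L > 1"
    using kappa_gt_1 by (simp add: L_def)
  have "0 < \<epsilon>" "\<epsilon> < q"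
    using \<open>L > 1\<close> \<open>0 < \<theta>\<close> \<open>\<theta> < 1\<close> q_pos by (auto simp: \<epsilon>_def)
  have "\<theta> = L powr (log L \<theta>)"
    using \<open>L > 1\<close> \<open>0 < \<theta>\<close> by simp
  also have "\<dots> \<le> L powr (- \<epsilon>)"
    using \<open>L > 1\<close> by (intro powr_mono) (simp_all add: \<epsilon>_def)
  finally have "\<theta> \<le> L powr (- \<epsilon>)" .
  then have "tail (L * t) \<le> L powr (- \<epsilon>) * tail t" if "1 / 2 \<le> t" for t
    using contraction[OF that] mult_right_mono[OF _ tail_nonneg[of t]] by fastforce
  then have "tail u \<le> L powr \<epsilon> * (u / t) powr (- \<epsilon>) * tail t" if "1 / 2 \<le> t" "t \<le> u" for t u
    using \<open>L > 1\<close> \<open>0 < \<epsilon>\<close> that tail_nonneg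
    by (intro antimono_powr_decay_of_contraction[where t\<^sub>0 = "1 / 2"] tail_antimono) simp_all
  then show thesis
    using \<open>0 < \<epsilon>\<close> \<open>\<epsilon> < q\<close> \<open>L > 1\<close> by (intro that[of \<epsilon> "L powr \<epsilon>"]) simp_all
qed

lemma measure_ball_growth:
  obtains s C where "0 < s" "s < q" "C > 0"
    "\<And>r R. 1 \<le> r \<Longrightarrow> r \<le> R \<Longrightarrow> measure \<mu> (ball a R) \<le> C * (R / r) powr s * measure \<mu> (ball a r)"
proof -
  obtain \<epsilon> K where "0 < \<epsilon>" "\<epsilon> < q" "K > 0" and decay:
    "\<And>t u. 1 / 2 \<le> t \<Longrightarrow> t \<le> u \<Longrightarrow> tail u \<le> K * (u / t) powr (- \<epsilon>) * tail t"
    using tail_power_decay by blast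
  obtain B where "B > 0" and B: "\<And>r. 1 \<le> r \<Longrightarrow> tail (\<kappa> * r) \<le> B * measure \<mu> (ball a r) / r powr q"
    using tail_le_measure_ball by blast
  obtain c where "c > 0" and c:
    "\<And>r. 1 \<le> r \<Longrightarrow> c * measure \<mu> (ball a r) / r powr q + tail ((\<kappa> + 1) * r) \<le> tail (r / 2)"
    using tail_annulus_ge by blast
  define C where "C = K * B * (2 * \<kappa>) powr q / c"
  have "measure \<mu> (ball a R) \<le> C * (R / r) powr (q - \<epsilon>) * measure \<mu> (ball a r)"
    if "1 \<le> r" "r \<le> R" for r R
  proof -
    define \<rho> where "\<rho> = R / r"
    have "\<rho> \<ge> 1" "R = \<rho> * r"
      using that by (simp_all add: \<rho>_def)
    have "1 \<le> \<kappa> * r" "1 \<le> 2 * \<kappa> * R"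
      using mult_mono[of 1 \<kappa> 1 r] mult_mono[of 1 "2 * \<kappa>" 1 R] that kappa_gt_1 by simp_all
    have "c * measure \<mu> (ball a (2 * \<kappa> * R)) / (2 * \<kappa> * R) powr q \<le> tail (\<kappa> * R)"
      using c[OF \<open>1 \<le> 2 * \<kappa> * R\<close>] tail_nonneg[of "(\<kappa> + 1) * (2 * \<kappa> * R)"] by simp
    also have "\<dots> \<le> K * \<rho> powr (- \<epsilon>) * tail (\<kappa> * r)"
      using decay[of "\<kappa> * r" "\<kappa> * R"] that kappa_gt_1 \<open>1 \<le> \<kappa> * r\<close> by (simp add: \<rho>_def)
    also have "\<dots> \<le> K * \<rho> powr (- \<epsilon>) * (B * measure \<mu> (ball a r) / r powr q)"
      using B[OF \<open>1 \<le> r\<close>] \<open>K > 0\<close> by (intro mult_left_mono) simp_all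
    finally have "c * measure \<mu> (ball a (2 * \<kappa> * R)) / (2 * \<kappa> * R) powr q
        \<le> K * \<rho> powr (- \<epsilon>) * (B * measure \<mu> (ball a r) / r powr q)" .
    moreover have "(2 * \<kappa> * R) powr q = (2 * \<kappa>) powr q * \<rho> powr q * r powr q"
      using \<open>R = \<rho> * r\<close> \<open>\<rho> \<ge> 1\<close> that kappa_gt_1 by (simp add: powr_mult mult_ac)
    ultimately have "measure \<mu> (ball a (2 * \<kappa> * R)) \<le> C * (\<rho> powr q * \<rho> powr (- \<epsilon>)) * measure \<mu> (ball a r)"
      using \<open>c > 0\<close> \<open>\<rho> \<ge> 1\<close> that kappa_gt_1 by (simp add: C_def field_simps)
    moreover have "measure \<mu> (ball a R) \<le> measure \<mu> (ball a (2 * \<kappa> * R))"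
      using that kappa_gt_1 by (intro measure_ball_mono) simp
    ultimately show ?thesis
      using \<open>\<rho> \<ge> 1\<close> by (simp add: \<rho>_def powr_add[symmetric])
  qed
  then show thesis
    using \<open>0 < \<epsilon>\<close> \<open>\<epsilon> < q\<close> \<open>K > 0\<close> \<open>B > 0\<close> \<open>c > 0\<close> kappa_gt_1
    by (intro that[of "q - \<epsilon>" C]) (simp_all add: C_def)
qed

end

theorem theorem4p5:
  fixes \<mu> :: "'a::metric_space measure" and a :: 'a and \<kappa> q :: real
  assumes borel_sets: "sets borel \<subseteq> sets \<mu>"
    and complete: "complete_measure \<mu>"
    and balls_pos: "\<And>x r. r > 0 \<Longrightarrow> 0 < emeasure \<mu> (ball x r) \<and> emeasure \<mu> (ball x r) < \<infinity>"
    and unbounded: "\<not> bounded (UNIV :: 'a set)"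
    and kappa: "\<kappa> > 1"
    and unif_perfect: "\<And>r. r \<ge> 1 \<Longrightarrow> ball a (\<kappa> * r) - ball a r \<noteq> {}"
    and mu_doubling: "doubling_wrt dist (emeasure \<mu>)"
    and q_pos: "q > 0"
    and hat_doubling: "doubling_wrt (sph_dhat a) (sph_measure a q \<mu>)"
  shows "\<exists>s C. 0 < s \<and> s < q \<and> C > 0 \<and>
           (\<forall>r R. 1 \<le> r \<and> r \<le> R \<longrightarrow>
              measure \<mu> (ball a r) / measure \<mu> (ball a R) \<ge> C * (r / R) powr s)"
proof -
  interpret uniformly_perfect_sphericalized_doubling \<mu> a q \<kappa>
    using borel_sets mu_doubling q_pos hat_doubling kappa unif_perfect by unfold_locales
  obtain s C where "0 < s" "s < q" "C > 0" and growth: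
    "\<And>r R. 1 \<le> r \<Longrightarrow> r \<le> R \<Longrightarrow> measure \<mu> (ball a R) \<le> C * (R / r) powr s * measure \<mu> (ball a r)"
    using measure_ball_growth by blast
  have "1 / C * (r / R) powr s \<le> measure \<mu> (ball a r) / measure \<mu> (ball a R)" if "1 \<le> r" "r \<le> R" for r R
  proof -
    have "0 < measure \<mu> (ball a R)" "0 < C * (R / r) powr s"
      using that \<open>C > 0\<close> by (simp_all add: measure_ball_pos)
    have "1 / C * (r / R) powr s = 1 / (C * (R / r) powr s)"
      using that by (simp add: powr_divide)
    also have "\<dots> \<le> measure \<mu> (ball a r) / measure \<mu> (ball a R)"
      using growth[OF that] \<open>0 < measure \<mu> (ball a R)\<close> \<open>0 < C * (R / r) powr s\<close>
      by (simp add: divide_simps mult.commute)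
    finally show ?thesis .
  qed
  then show ?thesis
    using \<open>0 < s\<close> \<open>s < q\<close> \<open>C > 0\<close> by (intro exI[of _ s] exI[of _ "1 / C"]) simp
qed

end
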